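(* Consider the algorithm described below (Algorithm A) for a real Hilbert space $H$, a nonempty closed convex set $C\subseteq H$ and a mapping $F\colon H\to H$ that is monotone and Lipschitz continuous with constant $L>0$, where the solution set $S$ of the variational inequality "find $x^*\in C$ with $\langle F(x^* ),x-x^*\rangle\ge0$ for all $x\in C$" is nonempty. Let $(x_n)$, $(y_n)$, $(\lambda_n)$ be the sequences generated by Algorithm A (with their final values after any modification in Step 4), with $\alpha\in(0,\sqrt2-1)$, and let $z\in S$. Then for every $n\ge1$, $$\|x_{n+1}-z\|^2\le\|x_n-z\|^2-(1-\alpha(1+\sqrt2))\|x_n-y_n\|^2-(1-\sqrt2\alpha)\|x_{n+1}-y_n\|^2+\alpha\|x_n-y_{n-1}\|^2-2\lambda_n\langle F(z),y_n-z\rangle.$$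
   Context: Convention: $0/0=+\infty$ and $1/0=+\infty$. $P_C$ is the metric projection onto $C$. Algorithm A: Step 1. Choose $x_0\in C$, $\lambda_{-1}>0$, $\theta_0=1$, $\alpha\in(0,\sqrt2-1)$ and $\bar\lambda>0$. Compute $y_0=P_C(x_0-\lambda_{-1}F(x_0))$, $\lambda_0=\min\{\alpha\|x_0-y_0\|/\|F(x_0)-F(y_0)\|,\bar\lambda\}$, $x_1=P_C(x_0-\lambda_0F(y_0))$. Step 2 (for $n\ge1$). Set $\theta_n=1$ and define, for $y\in H$, $\theta>0$, $\lambda(y,\theta)=\min\{\alpha\|y-y_{n-1}\|/\|F(y)-F(y_{n-1})\|,\ \frac{1+\theta_{n-1}}{\theta}\lambda_{n-1},\ \bar\lambda\}$. Compute $y_n=2x_n-x_{n-1}$, $\lambda_n=\lambda(y_n,\theta_n)$, $x_{n+1}=P_C(x_n-\lambda_nF(y_n))$. Step 3. If $\|y_n-P_C(x_n-\lambda_nF(y_n))\|+\|x_n-y_n\|=0$, stop ($x_n$ is a solution). Otherwise compute $t_n=-\|x_{n+1}-x_n\|^2+2\lambda_n\langle F(y_n),y_n-x_{n+1}\rangle+(1-\alpha(1+\sqrt2))\|x_n-y_n\|^2-\alpha\|x_n-y_{n-1}\|^2+(1-\sqrt2\alpha)\|x_{n+1}-y_n\|^2$. Step 4. If $t_n\le0$, go to Step 2 with $n:=n+1$. Otherwise: (i) if $\lambda_n\ge\lambda_{n-1}$, choose $\lambda_n'\in[\lambda_{n-1},\lambda_n]$ with $\|\lambda_n'F(y_n)-\lambda_{n-1}F(y_{n-1})\|\le\alpha\|y_n-y_{n-1}\|$,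 recompute $x_{n+1}=P_C(x_n-\lambda_n'F(y_n))$, set $\lambda_n:=\lambda_n'$, $n:=n+1$, go to Step 2; (ii) if $\lambda_n<\lambda_{n-1}$, find $\theta_n'\in(0,1]$ such that, with $y_n'=x_n+\theta_n'(x_n-x_{n-1})$, one has $\lambda(y_n',\theta_n')\ge\theta_n'\lambda_{n-1}$; then choose $\lambda_n'\in[\theta_n'\lambda_{n-1},\lambda(y_n',\theta_n')]$ with $\|\lambda_n'F(y_n')-\theta_n'\lambda_{n-1}F(y_{n-1})\|\le\alpha\|y_n'-y_{n-1}\|$, recompute $x_{n+1}=P_C(x_n-\lambda_n'F(y_n'))$, set $\lambda_n:=\lambda_n'$, $\theta_n:=\theta_n'$, $y_n:=y_n'$, $n:=n+1$, go to Step 2. *)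

theory Defs
  imports "HOL-Analysis.Analysis"
begin

text \<open>Metric projection onto C (the nearest point of C to u); in a real Hilbert space it
exists and is unique when C is nonempty, closed and convex.\<close>
definition metric_proj :: "'a::real_inner set \<Rightarrow> 'a \<Rightarrow> 'a" where
  "metric_proj C u = (SOME p. p \<in> C \<and> (\<forall>y\<in>C. dist u p \<le> dist u y))"

text \<open>min of (a / b) and c, with the convention a/0 = +infinity (so the quotient is dropped
when b = 0).\<close>
definition min_quot :: "real \<Rightarrow> real \<Rightarrow> real \<Rightarrow> real" where
  "min_quot a b c = (if b = 0 then c else min (a / b) c)"

definition monotone_op :: "('a::real_inner \<Rightarrow> 'a) \<Rightarrow> bool" where
  "monotone_op F \<longleftrightarrow> (\<forall>x y. inner (F x - F y) (x - y) \<ge> 0)"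

definition VI_sol :: "'a::real_inner set \<Rightarrow> ('a \<Rightarrow> 'a) \<Rightarrow> 'a set" where
  "VI_sol C F = {xs \<in> C. \<forall>x\<in>C. inner (F xs) (x - xs) \<ge> 0}"

definition step_lam :: "('a::real_inner \<Rightarrow> 'a) \<Rightarrow> real \<Rightarrow> real \<Rightarrow> 'a \<Rightarrow> real \<Rightarrow> real \<Rightarrow> 'a \<Rightarrow> real \<Rightarrow> real" where
  "step_lam F \<alpha> lbar yprev lprev thprev y \<theta> =
     min_quot (\<alpha> * norm (y - yprev)) (norm (F y - F yprev)) (min ((1 + thprev) / \<theta> * lprev) lbar)"

definition algA_init where
  "algA_init C F \<alpha> lbar lm1 x y lam theta \<longleftrightarrow>
     x 0 \<in> C \<and> lm1 > 0 \<and> theta 0 = (1::real) \<and>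
     y 0 = metric_proj C (x 0 - lm1 *\<^sub>R F (x 0)) \<and>
     lam 0 = min_quot (\<alpha> * norm (x 0 - y 0)) (norm (F (x 0) - F (y 0))) lbar \<and>
     x 1 = metric_proj C (x 0 - lam 0 *\<^sub>R F (y 0))"

text \<open>Iteration n (n >= 1) of Steps 2--4, assuming the algorithm does not stop in Step 3 at n.
The sequences x, y, lam, theta hold the final values (after any modification in Step 4).\<close>
definition algA_step where
  "algA_step C F \<alpha> lbar x y lam theta n \<longleftrightarrow>
    (let y0 = 2 *\<^sub>R x n - x (n - 1);
         l0 = step_lam F \<alpha> lbar (y (n - 1)) (lam (n - 1)) (theta (n - 1)) y0 1;
         x0 = metric_proj C (x n - l0 *\<^sub>R F y0);
         t = - (norm (x0 - x n))\<^sup>2 + 2 * l0 * inner (F y0) (y0 - x0)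
             + (1 - \<alpha> * (1 + sqrt 2)) * (norm (x n - y0))\<^sup>2
             - \<alpha> * (norm (x n - y (n - 1)))\<^sup>2
             + (1 - sqrt 2 * \<alpha>) * (norm (x0 - y0))\<^sup>2
     in norm (y0 - x0) + norm (x n - y0) \<noteq> 0 \<and>
        ((t \<le> 0 \<and> theta n = 1 \<and> y n = y0 \<and> lam n = l0 \<and> x (Suc n) = x0)
         \<or> (t > 0 \<and> l0 \<ge> lam (n - 1) \<and> theta n = 1 \<and> y n = y0 \<and>
            lam (n - 1) \<le> lam n \<and> lam n \<le> l0 \<and>
            norm (lam n *\<^sub>R F (y n) - lam (n - 1) *\<^sub>R F (y (n - 1))) \<le> \<alpha> * norm (y n - y (n - 1)) \<and>
            x (Suc n) = metric_proj C (x n - lam n *\<^sub>R F (y n)))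
         \<or> (t > 0 \<and> l0 < lam (n - 1) \<and> 0 < theta n \<and> theta n \<le> 1 \<and>
            y n = x n + theta n *\<^sub>R (x n - x (n - 1)) \<and>
            step_lam F \<alpha> lbar (y (n - 1)) (lam (n - 1)) (theta (n - 1)) (y n) (theta n) \<ge> theta n * lam (n - 1) \<and>
            theta n * lam (n - 1) \<le> lam n \<and>
            lam n \<le> step_lam F \<alpha> lbar (y (n - 1)) (lam (n - 1)) (theta (n - 1)) (y n) (theta n) \<and>
            norm (lam n *\<^sub>R F (y n) - (theta n * lam (n - 1)) *\<^sub>R F (y (n - 1))) \<le> \<alpha> * norm (y n - y (n - 1)) \<and>
            x (Suc n) = metric_proj C (x n - lam n *\<^sub>R F (y n)))))"

end

theory Submission
  imports Defs
begin

text \<open>The projection inequality for \<open>x\<^sub>n\<^sub>+\<^sub>1\<close> tested at \<open>z\<close>, together with monotonicity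
  of F, bounds \<open>\<parallel>x\<^sub>n\<^sub>+\<^sub>1 - z\<parallel>\<^sup>2\<close> by the right-hand side plus the quantity \<open>t\<^sub>n\<close> of Step 3.
  If \<open>t\<^sub>n \<le> 0\<close> we are done. Otherwise Step 4 makes \<open>y\<^sub>n = x\<^sub>n + \<theta>(x\<^sub>n - x\<^sub>n\<^sub>-\<^sub>1)\<close> with
  \<open>\<parallel>\<lambda>\<^sub>n F y\<^sub>n - \<theta>\<lambda>\<^sub>n\<^sub>-\<^sub>1 F y\<^sub>n\<^sub>-\<^sub>1\<parallel> \<le> \<alpha>\<parallel>y\<^sub>n - y\<^sub>n\<^sub>-\<^sub>1\<parallel>\<close>; then the projection inequality
  defining \<open>x\<^sub>n\<close>, tested at \<open>x\<^sub>n\<^sub>+\<^sub>1\<close> and \<open>x\<^sub>n\<^sub>-\<^sub>1\<close>, Cauchy-Schwarz and the elementary bound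
  \<open>2(c + d)b \<le> (1 + \<surd>2)c\<^sup>2 + \<surd>2 b\<^sup>2 + d\<^sup>2\<close> show \<open>t\<^sub>n \<le> 0\<close> after all.\<close>

lemma infdist_minimizing_sequence:
  assumes "A \<noteq> {}"
  obtains f where "\<And>k. f k \<in> A" "(\<lambda>k. dist x (f k)) \<longlonglongrightarrow> infdist x A"
proof -
  have "\<exists>a\<in>A. dist x a < infdist x A + inverse (real (Suc k))" for k
  proof (rule ccontr)
    assume "\<not> ?thesis"
    then have "infdist x A + inverse (real (Suc k)) \<le> infdist x A"
      unfolding infdist_notempty[OF assms] by (intro cINF_greatest[OF assms]) (auto simp: not_less)
    then show False by simp
  qed
  then obtain f where fA: "\<And>k. f k \<in> A"
    and close: "\<And>k. dist x (f k) < infdist x A + inverse (real (Suc k))"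
    by metis
  have "(\<lambda>k. dist x (f k)) \<longlonglongrightarrow> infdist x A"
  proof (rule real_tendsto_sandwich)
    show "\<forall>\<^sub>F k in sequentially. infdist x A \<le> dist x (f k)"
      using fA by (simp add: infdist_le)
    show "\<forall>\<^sub>F k in sequentially. dist x (f k) \<le> infdist x A + inverse (real (Suc k))"
      using close by (simp add: less_imp_le)
  qed (rule tendsto_const LIMSEQ_inverse_real_of_nat_add)+
  with fA show ?thesis by (rule that)
qed

lemma dist_sq_midpoint:
  fixes u p q :: "'a::real_inner"
  shows "(dist p q)\<^sup>2 = 2 * (dist u p)\<^sup>2 + 2 * (dist u q)\<^sup>2 - 4 * (dist u (midpoint p q))\<^sup>2"
  unfolding dist_norm midpoint_def power2_norm_eq_inner
  by (simp add: inner_diff inner_add inner_commute algebra_simps)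

lemma convex_dist_sq_le_infdist:
  fixes C :: "'a::real_inner set"
  assumes "convex C" "p \<in> C" "q \<in> C"
  shows "(dist p q)\<^sup>2 \<le> 2 * (dist u p)\<^sup>2 + 2 * (dist u q)\<^sup>2 - 4 * (infdist u C)\<^sup>2"
proof -
  have "midpoint p q \<in> C"
    using assms closed_segment_subset midpoint_in_closed_segment by blast
  then have "infdist u C \<le> dist u (midpoint p q)"
    by (rule infdist_le)
  then have "(infdist u C)\<^sup>2 \<le> (dist u (midpoint p q))\<^sup>2"
    by (simp add: power_mono infdist_nonneg)
  then show ?thesis
    unfolding dist_sq_midpoint[of p q u] by linarith
qed

lemma closed_convex_has_closest_point:
  fixes C :: "'a::{real_inner, complete_space} set"
  assumes "C \<noteq> {}" "closed C" "convex C"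
  obtains p where "p \<in> C" "\<And>y. y \<in> C \<Longrightarrow> dist u p \<le> dist u y"
proof -
  define d where "d = infdist u C"
  obtain f where fC: "\<And>k. f k \<in> C" and lim: "(\<lambda>k. dist u (f k)) \<longlonglongrightarrow> d"
    using infdist_minimizing_sequence[OF assms(1)] unfolding d_def by metis
  define g where "g k = (dist u (f k))\<^sup>2 - d\<^sup>2" for k
  have g0: "g \<longlonglongrightarrow> 0"
  proof -
    have "(\<lambda>k. (dist u (f k))\<^sup>2 - d\<^sup>2) \<longlonglongrightarrow> d\<^sup>2 - d\<^sup>2"
      by (intro tendsto_intros lim)
    then show ?thesis unfolding g_def by simp
  qed
  have gap: "(dist (f i) (f j))\<^sup>2 \<le> 2 * g i + 2 * g j" for i j
    using convex_dist_sq_le_infdist[OF assms(3) fC fC, where u=u] unfolding g_def d_def by simp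
  have "Cauchy f"
  proof (rule metric_CauchyI)
    fix e :: real
    assume "0 < e"
    then have "\<forall>\<^sub>F k in sequentially. g k < e\<^sup>2 / 4"
      using g0 by (intro order_tendstoD) auto
    then obtain M where M: "\<And>k. k \<ge> M \<Longrightarrow> g k < e\<^sup>2 / 4"
      unfolding eventually_sequentially by blast
    have "dist (f i) (f j) < e" if "i \<ge> M" "j \<ge> M" for i j
    proof -
      have "(dist (f i) (f j))\<^sup>2 < e\<^sup>2"
        using gap[of i j] M[OF that(1)] M[OF that(2)] by linarith
      with \<open>0 < e\<close> show ?thesis by (simp add: power_less_imp_less_base)
    qed
    then show "\<exists>M. \<forall>i\<ge>M. \<forall>j\<ge>M. dist (f i) (f j) < e" by blast
  qed
  then obtain p where fp: "f \<longlonglongrightarrow> p"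
    using Cauchy_convergent_iff convergent_def by blast
  have "p \<in> C"
    using \<open>closed C\<close> fC fp closed_sequentially by blast
  moreover have "dist u p = d"
    using LIMSEQ_unique[OF tendsto_dist[OF tendsto_const fp] lim] .
  ultimately show ?thesis
    using that infdist_le unfolding d_def by metis
qed

lemma metric_proj_closest:
  fixes C :: "'a::{real_inner, complete_space} set"
  assumes "C \<noteq> {}" "closed C" "convex C"
  shows "metric_proj C u \<in> C" "\<And>y. y \<in> C \<Longrightarrow> dist u (metric_proj C u) \<le> dist u y"
proof -
  obtain p where "p \<in> C" "\<And>y. y \<in> C \<Longrightarrow> dist u p \<le> dist u y"
    using closed_convex_has_closest_point[OF assms, where u=u] by metis
  then have "\<exists>p. p \<in> C \<and> (\<forall>y\<in>C. dist u p \<le> dist u y)" by blast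
  from someI_ex[OF this] show "metric_proj C u \<in> C" "\<And>y. y \<in> C \<Longrightarrow> dist u (metric_proj C u) \<le> dist u y"
    unfolding metric_proj_def by blast+
qed

lemma metric_proj_inner_le:
  fixes C :: "'a::{real_inner, complete_space} set"
  assumes "C \<noteq> {}" "closed C" "convex C" "y \<in> C"
  shows "inner (u - metric_proj C u) (y - metric_proj C u) \<le> 0"
  using any_closest_point_dot[OF assms(3,2) metric_proj_closest(1)[OF assms(1-3)] assms(4)]
    metric_proj_closest(2)[OF assms(1-3)] by blast

lemma sqrt2_young:
  fixes b c d :: real
  shows "2 * (c + d) * b \<le> (1 + sqrt 2) * c\<^sup>2 + sqrt 2 * b\<^sup>2 + d\<^sup>2"
proof -
  have "(1 + sqrt 2) * ((1 + sqrt 2) * c\<^sup>2 + (sqrt 2 - 1) * b\<^sup>2 - 2 * c * b) = ((1 + sqrt 2) * c - b)\<^sup>2"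
    by (simp add: power2_eq_square algebra_simps)
  moreover have "0 < 1 + sqrt 2" by (intro add_pos_nonneg) simp_all
  ultimately have "2 * c * b \<le> (1 + sqrt 2) * c\<^sup>2 + (sqrt 2 - 1) * b\<^sup>2"
    by (metis diff_ge_0_iff_ge zero_le_mult_iff zero_le_power2 not_le)
  moreover have "2 * d * b \<le> d\<^sup>2 + b\<^sup>2"
    using sum_squares_bound[of d b] by (simp add: power2_eq_square algebra_simps)
  ultimately show ?thesis by (simp add: algebra_simps)
qed

lemma proj_step_dist_sq:
  fixes F :: "'a::real_inner \<Rightarrow> 'a"
  assumes proj: "inner (xn - l *\<^sub>R F yn - xs) (z - xs) \<le> 0"
    and "0 \<le> l" and "monotone_op F"
  shows "(norm (xs - z))\<^sup>2 \<le> (norm (xn - z))\<^sup>2 - (norm (xs - xn))\<^sup>2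
      + 2 * l * inner (F yn) (yn - xs) - 2 * l * inner (F z) (yn - z)"
proof -
  have "0 \<le> l * inner (F yn - F z) (yn - z)"
    using assms(2,3) unfolding monotone_op_def by simp
  moreover have "(norm (xn - z))\<^sup>2 = (norm (xs - xn))\<^sup>2 + (norm (xs - z))\<^sup>2 - 2 * inner (xn - xs) (z - xs)"
    unfolding power2_norm_eq_inner by (simp add: inner_diff inner_commute algebra_simps)
  ultimately show ?thesis
    using proj by (simp add: inner_diff algebra_simps)
qed

lemma inertial_step_ineq:
  fixes F :: "'a::real_inner \<Rightarrow> 'a"
  assumes proj_xs: "inner (xp - lp *\<^sub>R F yp - xn) (xs - xn) \<le> 0"
    and proj_xp: "inner (xp - lp *\<^sub>R F yp - xn) (xp - xn) \<le> 0"
    and yn: "yn = xn + th *\<^sub>R (xn - xp)" and "0 \<le> th"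
    and lip: "norm (l *\<^sub>R F yn - (th * lp) *\<^sub>R F yp) \<le> \<alpha> * norm (yn - yp)"
  shows "- (norm (xs - xn))\<^sup>2 + 2 * l * inner (F yn) (yn - xs)
      \<le> - (norm (xs - yn))\<^sup>2 - (norm (xn - yn))\<^sup>2 + 2 * \<alpha> * norm (yn - yp) * norm (xs - yn)"
proof -
  define w where "w = xp - lp *\<^sub>R F yp - xn"
  \<comment> \<open>weighting the two projection inequalities by \<open>th\<close> and \<open>th\<^sup>2\<close> tests \<open>w\<close> at \<open>xs - yn\<close>\<close>
  have "inner (th *\<^sub>R w) (xs - yn) = th * inner w (xs - xn) + th\<^sup>2 * inner w (xp - xn)"
    unfolding yn by (simp add: inner_diff_right power2_eq_square algebra_simps)
  also have "\<dots> \<le> 0"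
    using proj_xs proj_xp \<open>0 \<le> th\<close> unfolding w_def
    by (intro add_nonpos_nonpos mult_nonneg_nonpos) simp_all
  finally have "inner (th *\<^sub>R w) (xs - yn) \<le> 0" .
  moreover have "th *\<^sub>R w = (xn - yn) - (th * lp) *\<^sub>R F yp"
    unfolding w_def yn by (simp add: algebra_simps)
  ultimately have inertia: "(th * lp) * inner (F yp) (yn - xs) \<le> inner (yn - xn) (xs - yn)"
    by (simp add: inner_diff_left inner_diff_right inner_commute algebra_simps)
  have "inner (l *\<^sub>R F yn - (th * lp) *\<^sub>R F yp) (yn - xs)
      \<le> norm (l *\<^sub>R F yn - (th * lp) *\<^sub>R F yp) * norm (yn - xs)"
    by (rule norm_cauchy_schwarz)
  also have "\<dots> \<le> \<alpha> * norm (yn - yp) * norm (xs - yn)"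
    using lip by (simp add: norm_minus_commute mult_right_mono)
  finally have "l * inner (F yn) (yn - xs) - (th * lp) * inner (F yp) (yn - xs)
      \<le> \<alpha> * norm (yn - yp) * norm (xs - yn)"
    by (simp add: inner_diff_left)
  moreover have "(norm (xs - xn))\<^sup>2 = (norm (xs - yn))\<^sup>2 + (norm (xn - yn))\<^sup>2 + 2 * inner (yn - xn) (xs - yn)"
    unfolding power2_norm_eq_inner by (simp add: inner_diff inner_commute algebra_simps)
  ultimately show ?thesis
    using inertia by linarith
qed

definition algA_test :: "('a::real_inner \<Rightarrow> 'a) \<Rightarrow> real \<Rightarrow> 'a \<Rightarrow> 'a \<Rightarrow> 'a \<Rightarrow> 'a \<Rightarrow> real \<Rightarrow> real" where
  "algA_test F \<alpha> xn xs yn yp l =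
     - (norm (xs - xn))\<^sup>2 + 2 * l * inner (F yn) (yn - xs)
     + (1 - \<alpha> * (1 + sqrt 2)) * (norm (xn - yn))\<^sup>2
     - \<alpha> * (norm (xn - yp))\<^sup>2
     + (1 - sqrt 2 * \<alpha>) * (norm (xs - yn))\<^sup>2"

lemma inertial_test_nonpos:
  fixes F :: "'a::real_inner \<Rightarrow> 'a"
  assumes "inner (xp - lp *\<^sub>R F yp - xn) (xs - xn) \<le> 0"
    and "inner (xp - lp *\<^sub>R F yp - xn) (xp - xn) \<le> 0"
    and "yn = xn + th *\<^sub>R (xn - xp)" and "0 \<le> th"
    and "norm (l *\<^sub>R F yn - (th * lp) *\<^sub>R F yp) \<le> \<alpha> * norm (yn - yp)" and "0 \<le> \<alpha>"
  shows "algA_test F \<alpha> xn xs yn yp l \<le> 0"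
proof -
  define a b c d where "a = norm (yn - yp)" and "b = norm (xs - yn)"
    and "c = norm (xn - yn)" and "d = norm (xn - yp)"
  have "a \<le> c + d"
    using norm_triangle_ineq[of "yn - xn" "xn - yp"]
    unfolding a_def c_def d_def by (simp add: norm_minus_commute)
  then have "2 * a * b \<le> 2 * (c + d) * b"
    unfolding b_def by (simp add: mult_right_mono)
  also have "\<dots> \<le> (1 + sqrt 2) * c\<^sup>2 + sqrt 2 * b\<^sup>2 + d\<^sup>2"
    by (rule sqrt2_young)
  finally have "\<alpha> * (2 * a * b) \<le> \<alpha> * ((1 + sqrt 2) * c\<^sup>2 + sqrt 2 * b\<^sup>2 + d\<^sup>2)"
    using \<open>0 \<le> \<alpha>\<close> by (rule mult_left_mono)
  with inertial_step_ineq[OF assms(1-5)] show ?thesis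
    unfolding algA_test_def a_def b_def c_def d_def by (simp add: algebra_simps)
qed

lemma algA_step_next:
  assumes "algA_step C F \<alpha> lbar x y lam theta k"
  shows "x (Suc k) = metric_proj C (x k - lam k *\<^sub>R F (y k))"
  using assms unfolding algA_step_def Let_def by auto

lemma step_lam_nonneg:
  assumes "0 \<le> \<alpha>" "0 \<le> lp" "0 \<le> thp" "0 < \<theta>" "0 < lbar"
  shows "0 \<le> step_lam F \<alpha> lbar yp lp thp y \<theta>"
  using assms unfolding step_lam_def min_quot_def by auto

lemma algA_step_nonneg:
  assumes "algA_step C F \<alpha> lbar x y lam theta k"
    and "0 \<le> lam (k - 1)" "0 \<le> theta (k - 1)" "0 < \<alpha>" "0 < lbar"
  shows "0 \<le> lam k \<and> 0 \<le> theta k"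
proof -
  have "0 \<le> step_lam F \<alpha> lbar (y (k - 1)) (lam (k - 1)) (theta (k - 1)) (2 *\<^sub>R x k - x (k - 1)) 1"
    using assms by (intro step_lam_nonneg) auto
  with assms(1,2) show ?thesis
    unfolding algA_step_def Let_def
    apply (elim conjE disjE)
    subgoal by simp
    subgoal by simp
    subgoal by (metis less_imp_le mult_nonneg_nonneg order_trans)
    done
qed

lemma algA_step_cases:
  assumes "algA_step C F \<alpha> lbar x y lam theta k"
  obtains "algA_test F \<alpha> (x k) (x (Suc k)) (y k) (y (k - 1)) (lam k) \<le> 0"
  | th where "0 \<le> th" "y k = x k + th *\<^sub>R (x k - x (k - 1))"
      "norm (lam k *\<^sub>R F (y k) - (th * lam (k - 1)) *\<^sub>R F (y (k - 1))) \<le> \<alpha> * norm (y k - y (k - 1))"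
proof -
  have extrapolation: "2 *\<^sub>R x k - x (k - 1) = x k + 1 *\<^sub>R (x k - x (k - 1))"
    by (simp add: scaleR_2 algebra_simps)
  show ?thesis
    using assms unfolding algA_step_def Let_def
    apply (elim conjE disjE)
    subgoal using that(1) unfolding algA_test_def by simp
    subgoal using that(2)[of 1] extrapolation by simp
    subgoal using that(2)[of "theta k"] by simp
    done
qed

lemma algA_next:
  assumes "algA_init C F \<alpha> lbar lm1 x y lam theta"
    and "\<forall>k\<in>{1..n}. algA_step C F \<alpha> lbar x y lam theta k" and "k \<le> n"
  shows "x (Suc k) = metric_proj C (x k - lam k *\<^sub>R F (y k))"
proof (cases "k = 0")
  case True
  then show ?thesis using assms(1) unfolding algA_init_def by simp
next
  case False
  with assms(2,3) have "algA_step C F \<alpha> lbar x y lam theta k" by simp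
  then show ?thesis by (rule algA_step_next)
qed

lemma algA_nonneg:
  assumes "0 < \<alpha>" "0 < lbar"
    and "algA_init C F \<alpha> lbar lm1 x y lam theta"
    and "\<forall>k\<in>{1..n}. algA_step C F \<alpha> lbar x y lam theta k" and "k \<le> n"
  shows "0 \<le> lam k \<and> 0 \<le> theta k"
  using \<open>k \<le> n\<close>
proof (induction k)
  case 0
  with assms(1-3) show ?case
    unfolding algA_init_def min_quot_def by auto
next
  case (Suc k)
  with assms(1,2,4) show ?case
    using algA_step_nonneg[of C F \<alpha> lbar x y lam theta "Suc k"] by simp
qed

lemma algA_in_set:
  fixes C :: "'a::{real_inner, complete_space} set"
  assumes "C \<noteq> {}" "closed C" "convex C"
    and "algA_init C F \<alpha> lbar lm1 x y lam theta"
    and "\<forall>k\<in>{1..n}. algA_step C F \<alpha> lbar x y lam theta k" and "k \<le> Suc n"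
  shows "x k \<in> C"
proof (cases k)
  case 0
  then show ?thesis using assms(4) unfolding algA_init_def by simp
next
  case (Suc j)
  then show ?thesis
    using algA_next[OF assms(4,5), of j] metric_proj_closest(1)[OF assms(1-3)] assms(6) by simp
qed

lemma algA_test_nonpos:
  fixes C :: "'a::{real_inner, complete_space} set"
  assumes "C \<noteq> {}" "closed C" "convex C" "0 < \<alpha>"
    and "algA_init C F \<alpha> lbar lm1 x y lam theta"
    and "\<forall>k\<in>{1..n}. algA_step C F \<alpha> lbar x y lam theta k" and "1 \<le> n"
  shows "algA_test F \<alpha> (x n) (x (Suc n)) (y n) (y (n - 1)) (lam n) \<le> 0"
proof -
  have "algA_step C F \<alpha> lbar x y lam theta n"
    using assms(6,7) by simp
  then show ?thesis
  proof (cases rule: algA_step_cases)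
    case (2 th)
    define u where "u = x (n - 1) - lam (n - 1) *\<^sub>R F (y (n - 1))"
    have "x n = metric_proj C u"
      using algA_next[OF assms(5,6), of "n - 1"] assms(7) unfolding u_def by simp
    moreover have "x (Suc n) \<in> C" "x (n - 1) \<in> C"
      using algA_in_set[OF assms(1-3,5,6)] by simp_all
    ultimately have "inner (u - x n) (x (Suc n) - x n) \<le> 0" "inner (u - x n) (x (n - 1) - x n) \<le> 0"
      using metric_proj_inner_le[OF assms(1-3)] by simp_all
    with 2 \<open>0 < \<alpha>\<close> show ?thesis
      unfolding u_def by (metis inertial_test_nonpos less_imp_le)
  qed
qed

text \<open>Lipschitz continuity of F and the bound \<open>\<alpha> < sqrt 2 - 1\<close> are only needed for the
  step sizes of Step 4 to exist; the estimate itself holds for every \<open>\<alpha> > 0\<close>.\<close>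

theorem lemma4p5:
  fixes C :: "'a::{real_inner, complete_space} set"
    and F :: "'a \<Rightarrow> 'a"
    and L \<alpha> lbar lm1 :: real
    and x y :: "nat \<Rightarrow> 'a" and lam theta :: "nat \<Rightarrow> real"
    and z :: 'a and n :: nat
  assumes "C \<noteq> {}" and "closed C" and "convex C"
    and "monotone_op F" and "L > 0" and "L-lipschitz_on UNIV F"
    and "VI_sol C F \<noteq> {}"
    and "0 < \<alpha>" and "\<alpha> < sqrt 2 - 1" and "lbar > 0"
    and "algA_init C F \<alpha> lbar lm1 x y lam theta"
    and "\<forall>k\<in>{1..n}. algA_step C F \<alpha> lbar x y lam theta k"
    and "z \<in> VI_sol C F"
    and "n \<ge> 1"
  shows "(norm (x (Suc n) - z))\<^sup>2 \<le> (norm (x n - z))\<^sup>2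
           - (1 - \<alpha> * (1 + sqrt 2)) * (norm (x n - y n))\<^sup>2
           - (1 - sqrt 2 * \<alpha>) * (norm (x (Suc n) - y n))\<^sup>2
           + \<alpha> * (norm (x n - y (n - 1)))\<^sup>2
           - 2 * lam n * inner (F z) (y n - z)"
proof -
  have "z \<in> C"
    using assms(13) unfolding VI_sol_def by simp
  then have "inner (x n - lam n *\<^sub>R F (y n) - x (Suc n)) (z - x (Suc n)) \<le> 0"
    using metric_proj_inner_le[OF assms(1-3)] algA_next[OF assms(11,12), of n] by simp
  then have "(norm (x (Suc n) - z))\<^sup>2 \<le> (norm (x n - z))\<^sup>2 - (norm (x (Suc n) - x n))\<^sup>2
      + 2 * lam n * inner (F (y n)) (y n - x (Suc n)) - 2 * lam n * inner (F z) (y n - z)"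
    using algA_nonneg[OF assms(8,10-12), of n] assms(4) by (intro proj_step_dist_sq) simp_all
  moreover have "algA_test F \<alpha> (x n) (x (Suc n)) (y n) (y (n - 1)) (lam n) \<le> 0"
    using algA_test_nonpos[OF assms(1-3,8,11,12,14)] .
  ultimately show ?thesis
    unfolding algA_test_def by linarith
qed

end
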